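(* Let $\rho$ be a density operator on $\mathcal H_A\otimes\mathcal H_B$ ($\dim\mathcal H_A=\dim\mathcal H_B=2$) and let $\mu$ be an ansatz. Then $\mathscr M_A'\subseteq\operatorname{box}(\mu)$ if and only if $\mathscr S_A'\subseteq\operatorname{box}(\mu)$.
   Context: $\sigma_0=\mathbb I,\sigma_1,\sigma_2,\sigma_3$ are the identity and Pauli matrices; $\mathbf r\cdot\sigma=\sum_{k=1}^3r_k\sigma_k$. Alice's EPR map is $\rho^{A\to B}(A)=\operatorname{Tr}_A[\rho(A\otimes\mathbb I^B)]$ for Hermitian $A$ on $\mathcal H_A$; $X'$ denotes the image of a set $X$ under this map. $\mathscr M_A=\{M \text{ Hermitian on }\mathcal H_A: O\le M\le\mathbb I^A\}$ and $\mathscr S_A=\{M\in\mathscr M_A:\operatorname{Tr}M=1\}=\{\tfrac12(\mathbb I^A+\mathbf r\cdot\sigma^A):|\mathbf r|\le1\}$. An ansatz is a Borel probability measure $\mu$ on the unit sphere $S^2\subset\mathbb R^3$ with $\int\tfrac12(\mathbb I^B+\mathbf n\cdot\sigma^B)\,d\mu(\mathbf n)=\operatorname{Tr}_A\rho$, and $\operatorname{box}(\mu)=\{\int\beta(\mathbf n)\tfrac12(\mathbb I^B+\mathbf n\cdot\sigma^B)\,d\mu(\mathbf n):\beta:S^2\to[0,1]\text{ Borel}\}$. *)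

theory Defs
  imports "HOL-Probability.Probability"
begin

text \<open>Qubit operators are 2x2 complex matrices indexed by the type 2 (elements 0,1).
  Operators on H_A (x) H_B are matrices indexed by 2 \<times> 2, the first component being A.\<close>

type_synonym qop = "complex ^ 2 ^ 2"
type_synonym qqop = "complex ^ (2 \<times> 2) ^ (2 \<times> 2)"

definition ctrans :: "complex ^ 'n ^ 'n \<Rightarrow> complex ^ 'n ^ 'n" where
  "ctrans M = (\<chi> i j. cnj (M $ j $ i))"

definition hermitian_mat :: "complex ^ 'n ^ 'n \<Rightarrow> bool" where
  "hermitian_mat M \<longleftrightarrow> ctrans M = M"

definition mtrace :: "complex ^ 'n ^ 'n \<Rightarrow> complex" where
  "mtrace M = (\<Sum>i\<in>UNIV. M $ i $ i)"

definition psd :: "complex ^ 'n ^ 'n \<Rightarrow> bool" where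
  "psd M \<longleftrightarrow> hermitian_mat M \<and>
     (\<forall>v :: complex ^ 'n. 0 \<le> Re (\<Sum>i\<in>UNIV. cnj (v $ i) * (M *v v) $ i))"

definition loewner_le :: "complex ^ 'n ^ 'n \<Rightarrow> complex ^ 'n ^ 'n \<Rightarrow> bool" where
  "loewner_le A B \<longleftrightarrow> psd (B - A)"

definition density_op :: "complex ^ 'n ^ 'n \<Rightarrow> bool" where
  "density_op \<rho> \<longleftrightarrow> psd \<rho> \<and> mtrace \<rho> = 1"

definition kron :: "complex ^ 'a ^ 'a \<Rightarrow> complex ^ 'b ^ 'b \<Rightarrow> complex ^ ('a::finite \<times> 'b::finite) ^ ('a \<times> 'b)" where
  "kron A B = (\<chi> p q. A $ fst p $ fst q * B $ snd p $ snd q)"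

definition ptrace_A :: "complex ^ ('a::finite \<times> 'b::finite) ^ ('a \<times> 'b) \<Rightarrow> complex ^ 'b ^ 'b" where
  "ptrace_A M = (\<chi> i j. \<Sum>a\<in>UNIV. M $ (a, i) $ (a, j))"

definition epr_map :: "qqop \<Rightarrow> qop \<Rightarrow> qop" where
  "epr_map \<rho> A = ptrace_A (\<rho> ** kron A (mat 1))"

definition pauli1 :: qop where "pauli1 = (\<chi> i j. if i = j then 0 else 1)"
definition pauli2 :: qop where
  "pauli2 = (\<chi> i j. if i = j then 0 else if i = 0 then - \<i> else \<i>)"
definition pauli3 :: qop where
  "pauli3 = (\<chi> i j. if i = j then (if i = 0 then 1 else -1) else 0)"

text \<open>r \<cdot> \<sigma> for r in R^3 (coordinates r$1, r$2, r$3; note 3 = 0 in the type 3).\<close>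
definition pauli_dot :: "real ^ 3 \<Rightarrow> qop" where
  "pauli_dot r = (r $ 1) *\<^sub>R pauli1 + (r $ 2) *\<^sub>R pauli2 + (r $ 3) *\<^sub>R pauli3"

definition bloch :: "real ^ 3 \<Rightarrow> qop" where
  "bloch r = (1/2) *\<^sub>R (mat 1 + pauli_dot r)"

definition M_A :: "qop set" where
  "M_A = {M. hermitian_mat M \<and> loewner_le 0 M \<and> loewner_le M (mat 1)}"

definition S_A :: "qop set" where
  "S_A = {M \<in> M_A. mtrace M = 1}"

definition mat_integral :: "'x measure \<Rightarrow> ('x \<Rightarrow> complex ^ 'n ^ 'm) \<Rightarrow> complex ^ 'n ^ 'm" where
  "mat_integral \<mu> f = (\<chi> i j. integral\<^sup>L \<mu> (\<lambda>x. f x $ i $ j))"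

definition sphere_prob :: "(real ^ 3) measure \<Rightarrow> bool" where
  "sphere_prob \<mu> \<longleftrightarrow> prob_space \<mu> \<and> sets \<mu> = sets (restrict_space borel (sphere 0 1))
      \<and> space \<mu> = sphere 0 1"

definition ansatz :: "qqop \<Rightarrow> (real ^ 3) measure \<Rightarrow> bool" where
  "ansatz \<rho> \<mu> \<longleftrightarrow> sphere_prob \<mu> \<and> mat_integral \<mu> bloch = ptrace_A \<rho>"

definition ansatz_box :: "(real ^ 3) measure \<Rightarrow> qop set" where
  "ansatz_box \<mu> = {mat_integral \<mu> (\<lambda>n. \<beta> n *\<^sub>R bloch n) | \<beta>.
      \<beta> \<in> borel_measurable \<mu> \<and> (\<forall>n\<in>space \<mu>. 0 \<le> \<beta> n \<and> \<beta> n \<le> 1)}"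

end

theory Submission
  imports Defs
begin

(*
  The box of an ansatz contains 0, is closed under scaling by [0,1], and is symmetric under
  X \<mapsto> Tr_A \<rho> - X (replace the weight \<beta> by 1 - \<beta>).  For an effect M with tr M = t \<le> 1,
  the qubit identity "tr M \<cdot> I - M is positive" shows that M / t is a state, so the image of M is
  t times the image of a state.  If t > 1, then I - M is an effect of trace 2 - t < 1, and the
  image of M is Tr_A \<rho> minus the image of I - M.
*)

definition quad_form :: "complex ^ 'n ^ 'n \<Rightarrow> complex ^ 'n \<Rightarrow> real" where
  "quad_form M v = Re (\<Sum>i\<in>UNIV. cnj (v $ i) * (M *v v) $ i)"

lemma psd_iff_quad_form: "psd M \<longleftrightarrow> hermitian_mat M \<and> (\<forall>v. 0 \<le> quad_form M v)"
  by (simp add: psd_def quad_form_def)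

lemma quad_form_scaleR: "quad_form (c *\<^sub>R M) v = c * quad_form M v"
proof -
  have "((c *\<^sub>R M) *v v) $ i = c *\<^sub>R (M *v v) $ i" for i
    by (simp add: matrix_vector_mult_def scaleR_sum_right)
  then show ?thesis
    by (simp add: quad_form_def mult_scaleR_right flip: scaleR_sum_right)
qed

lemma matrix_vector_mult_axis: "(M *v axis i 1) $ k = M $ k $ i"
  unfolding matrix_vector_mult_def axis_def by (simp add: if_distrib sum.delta cong: if_cong)

lemma quad_form_axis: "quad_form M (axis i 1) = Re (M $ i $ i)"
proof -
  have "cnj (axis i 1 $ k) * M $ k $ i = (if k = i then M $ i $ i else 0)" for k
    by (simp add: axis_def)
  then show ?thesis unfolding quad_form_def matrix_vector_mult_axis by simp
qed

lemma hermitian_diff: "hermitian_mat M \<Longrightarrow> hermitian_mat N \<Longrightarrow> hermitian_mat (M - N)"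
  unfolding hermitian_mat_def ctrans_def by (simp add: vec_eq_iff)

lemma hermitian_scaleR: "hermitian_mat M \<Longrightarrow> hermitian_mat (c *\<^sub>R M)"
  unfolding hermitian_mat_def ctrans_def by (simp add: vec_eq_iff)

lemma hermitian_mat_of_real: "hermitian_mat (mat (of_real r) :: complex ^ 'n ^ 'n)"
  unfolding hermitian_mat_def ctrans_def by (simp add: vec_eq_iff mat_def)

lemma hermitian_diag_real: "hermitian_mat M \<Longrightarrow> M $ i $ i \<in> \<real>"
  unfolding hermitian_mat_def ctrans_def by (metis Reals_cnj_iff vec_lambda_beta)

lemma hermitian_mtrace_real: "hermitian_mat M \<Longrightarrow> mtrace M = of_real (Re (mtrace M))"
  unfolding mtrace_def by (simp add: hermitian_diag_real)

lemma psd_scaleR: "psd M \<Longrightarrow> 0 \<le> c \<Longrightarrow> psd (c *\<^sub>R M)"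
  by (simp add: psd_iff_quad_form quad_form_scaleR hermitian_scaleR)

lemma psd_mtrace_nonneg: "psd M \<Longrightarrow> 0 \<le> Re (mtrace M)"
proof -
  assume "psd M"
  then have "0 \<le> Re (M $ i $ i)" for i
    unfolding psd_iff_quad_form by (metis quad_form_axis)
  then show ?thesis unfolding mtrace_def Re_sum by (simp add: sum_nonneg)
qed

lemma mtrace_scaleR: "mtrace (c *\<^sub>R M) = c *\<^sub>R mtrace M"
  by (simp add: mtrace_def scaleR_sum_right)

lemma mtrace_qop: "mtrace (M :: qop) = M $ 1 $ 1 + M $ 2 $ 2"
  by (simp add: mtrace_def sum_2)

definition spin_flip :: "complex ^ 2 \<Rightarrow> complex ^ 2" where
  "spin_flip v = (\<chi> i. if i = 1 then cnj (v $ 2) else - cnj (v $ 1))"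

text \<open>For a qubit operator, conjugating by the antiunitary spin flip turns M into its
  adjugate, which is tr M \<cdot> I - M.\<close>
lemma quad_form_trace_minus: "quad_form (mat (mtrace M) - M) v = quad_form M (spin_flip v)"
  unfolding quad_form_def spin_flip_def mtrace_qop
  by (simp add: sum_2 matrix_vector_mult_def mat_def algebra_simps)

lemma psd_trace_minus: "psd (M :: qop) \<Longrightarrow> psd (mat (mtrace M) - M)"
  unfolding psd_iff_quad_form quad_form_trace_minus
  by (metis hermitian_mtrace_real hermitian_diff hermitian_mat_of_real)

lemma hermitian_quad_form_zero:
  assumes h: "hermitian_mat (M :: qop)" and z: "\<And>v. quad_form M v = 0"
  shows "M = 0"
proof -
  have quad: "quad_form M (\<chi> i. if i = 1 then 1 else x)
      = Re (M $ 1 $ 1 + M $ 1 $ 2 * x + cnj x * M $ 2 $ 1 + cnj x * M $ 2 $ 2 * x)" for x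
    unfolding quad_form_def by (simp add: sum_2 matrix_vector_mult_def algebra_simps)
  have off_diag: "M $ 2 $ 1 = cnj (M $ 1 $ 2)"
  proof -
    have "ctrans M $ 2 $ 1 = M $ 2 $ 1" using h unfolding hermitian_mat_def by simp
    then show ?thesis by (simp add: ctrans_def)
  qed
  have diag: "M $ i $ i = 0" for i
  proof -
    have "Re (M $ i $ i) = 0" using z[of "axis i 1"] by (simp add: quad_form_axis)
    then show ?thesis using hermitian_diag_real[OF h, of i] by (simp add: complex_is_Real_iff complex_eq_iff)
  qed
  have "Re (M $ 1 $ 2) = 0" and "Im (M $ 1 $ 2) = 0"
    using z[of "\<chi> i. if i = 1 then 1 else 1"] z[of "\<chi> i. if i = 1 then 1 else \<i>"]
    unfolding quad diag off_diag by (simp_all add: algebra_simps)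
  then have "M $ 1 $ 2 = 0" by (simp add: complex_eq_iff)
  then have "M $ i $ j = 0" for i j
    using exhaust_2[of i] exhaust_2[of j] diag off_diag by auto
  then show "M = 0" by (simp add: vec_eq_iff)
qed

lemma psd_mtrace_zero: "psd (M :: qop) \<Longrightarrow> mtrace M = 0 \<Longrightarrow> M = 0"
proof -
  assume p: "psd M" and t: "mtrace M = 0"
  have "psd (- 1 *\<^sub>R M)" using psd_trace_minus[OF p] t by simp
  then have "quad_form M v = 0" for v
    using p unfolding psd_iff_quad_form quad_form_scaleR by (smt (verit))
  then show "M = 0" using p hermitian_quad_form_zero by (auto simp: psd_iff_quad_form)
qed

lemma kron_diff_left: "kron (A - B) C = kron A C - kron B C"
  by (simp add: kron_def vec_eq_iff algebra_simps)

lemma kron_scaleR_left: "kron (c *\<^sub>R A) C = c *\<^sub>R kron A C"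
  by (simp add: kron_def vec_eq_iff)

lemma kron_mat_one: "kron (mat 1 :: complex ^ 'a ^ 'a) (mat 1 :: complex ^ 'b ^ 'b) = mat 1"
  by (auto simp add: kron_def vec_eq_iff mat_def prod_eq_iff)

lemma ptrace_A_diff: "ptrace_A (A - B) = ptrace_A A - ptrace_A B"
  by (simp add: ptrace_A_def vec_eq_iff sum_subtractf)

lemma ptrace_A_scaleR: "ptrace_A (c *\<^sub>R A) = c *\<^sub>R ptrace_A A"
  by (simp add: ptrace_A_def vec_eq_iff scaleR_sum_right)

lemma matrix_diff_ldistrib: "(A :: 'a :: ring_1 ^ 'n ^ 'm) ** (B - C) = A ** B - A ** C"
  by (simp add: matrix_matrix_mult_def vec_eq_iff algebra_simps sum_subtractf)

lemma epr_map_diff: "epr_map \<rho> (X - Y) = epr_map \<rho> X - epr_map \<rho> Y"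
  by (simp add: epr_map_def kron_diff_left matrix_diff_ldistrib ptrace_A_diff)

lemma epr_map_scaleR: "epr_map \<rho> (c *\<^sub>R X) = c *\<^sub>R epr_map \<rho> X"
  by (simp add: epr_map_def kron_scaleR_left matrix_scalar_ac ptrace_A_scaleR flip: scalar_matrix_assoc)

lemma epr_map_one: "epr_map \<rho> (mat 1) = ptrace_A \<rho>"
  by (simp add: epr_map_def kron_mat_one)

lemma continuous_on_bloch: "continuous_on UNIV (\<lambda>n. bloch n $ i $ j)"
proof -
  have "continuous_on UNIV (\<lambda>n :: real ^ 3. n $ k)" for k
    by (intro continuous_on_component continuous_on_id)
  then have "continuous_on UNIV bloch"
    unfolding bloch_def pauli_dot_def by (intro continuous_intros)
  then show ?thesis by (intro continuous_on_component)
qed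

lemma bloch_measurable:
  assumes "sphere_prob \<mu>"
  shows "(\<lambda>n. bloch n $ i $ j) \<in> borel_measurable \<mu>"
proof -
  have "(\<lambda>n. bloch n $ i $ j) \<in> borel_measurable (restrict_space borel (sphere 0 1))"
    by (intro measurable_restrict_space1 borel_measurable_continuous_onI continuous_on_bloch)
  moreover have "sets \<mu> = sets (restrict_space borel (sphere 0 1))"
    using assms by (simp add: sphere_prob_def)
  ultimately show ?thesis by (simp cong: measurable_cong_sets)
qed

lemma bloch_bounded_on_sphere: "\<exists>B. \<forall>n\<in>sphere 0 1. norm (bloch n $ i $ j) \<le> B"
proof -
  have "compact ((\<lambda>n. bloch n $ i $ j) ` sphere 0 1)"
    by (intro compact_continuous_image continuous_on_subset[OF continuous_on_bloch]) auto
  then have "bounded ((\<lambda>n. bloch n $ i $ j) ` sphere 0 1)"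
    by (rule compact_imp_bounded)
  then obtain B where "\<forall>x\<in>(\<lambda>n. bloch n $ i $ j) ` sphere 0 1. norm x \<le> B"
    unfolding bounded_iff by blast
  then show ?thesis by auto
qed

lemma integrable_scaleR_bloch:
  assumes \<mu>: "sphere_prob \<mu>" and \<beta>: "\<beta> \<in> borel_measurable \<mu>" "\<forall>n\<in>space \<mu>. \<bar>\<beta> n\<bar> \<le> 1"
  shows "integrable \<mu> (\<lambda>n. (\<beta> n *\<^sub>R bloch n) $ i $ j)"
proof -
  interpret prob_space \<mu> using \<mu> by (simp add: sphere_prob_def)
  obtain B where B: "\<forall>n\<in>sphere 0 1. norm (bloch n $ i $ j) \<le> B"
    using bloch_bounded_on_sphere by blast
  have "norm ((\<beta> n *\<^sub>R bloch n) $ i $ j) \<le> B" if "n \<in> space \<mu>" for n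
  proof -
    have "norm (bloch n $ i $ j) \<le> B" using B that \<mu> by (simp add: sphere_prob_def)
    moreover have "\<bar>\<beta> n\<bar> \<le> 1" using \<beta>(2) that by blast
    ultimately show ?thesis
      using mult_left_le_one_le[of "norm (bloch n $ i $ j)" "\<bar>\<beta> n\<bar>"] by simp
  qed
  then show ?thesis
    using bloch_measurable[OF \<mu>] \<beta>(1)
    by (intro integrable_const_bound[where B = B]) (simp_all add: AE_I2)
qed

lemma zero_in_ansatz_box: "0 \<in> ansatz_box \<mu>"
  unfolding ansatz_box_def
  by (intro CollectI exI[of _ "\<lambda>_. 0"]) (simp add: mat_integral_def vec_eq_iff)

lemma scaleR_in_ansatz_box:
  assumes "X \<in> ansatz_box \<mu>" and "0 \<le> c" "c \<le> 1"
  shows "c *\<^sub>R X \<in> ansatz_box \<mu>"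
proof -
  obtain \<beta> where X: "X = mat_integral \<mu> (\<lambda>n. \<beta> n *\<^sub>R bloch n)"
    and \<beta>: "\<beta> \<in> borel_measurable \<mu>" "\<forall>n\<in>space \<mu>. 0 \<le> \<beta> n \<and> \<beta> n \<le> 1"
    using assms(1) unfolding ansatz_box_def by blast
  have "c *\<^sub>R X = mat_integral \<mu> (\<lambda>n. (c * \<beta> n) *\<^sub>R bloch n)"
    unfolding X mat_integral_def by (simp add: vec_eq_iff scaleR_conv_of_real mult.assoc)
  moreover have "\<forall>n\<in>space \<mu>. 0 \<le> c * \<beta> n \<and> c * \<beta> n \<le> 1"
    using \<beta>(2) assms(2,3) by (simp add: mult_le_one)
  ultimately show ?thesis
    using \<beta>(1) unfolding ansatz_box_def by (intro CollectI exI[of _ "\<lambda>n. c * \<beta> n"]) simp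
qed

lemma marginal_minus_in_ansatz_box:
  assumes a: "ansatz \<rho> \<mu>" and "X \<in> ansatz_box \<mu>"
  shows "ptrace_A \<rho> - X \<in> ansatz_box \<mu>"
proof -
  have \<mu>: "sphere_prob \<mu>" using a by (simp add: ansatz_def)
  obtain \<beta> where X: "X = mat_integral \<mu> (\<lambda>n. \<beta> n *\<^sub>R bloch n)"
    and \<beta>: "\<beta> \<in> borel_measurable \<mu>" "\<forall>n\<in>space \<mu>. 0 \<le> \<beta> n \<and> \<beta> n \<le> 1"
    using assms(2) unfolding ansatz_box_def by blast
  have "integral\<^sup>L \<mu> (\<lambda>n. ((1 - \<beta> n) *\<^sub>R bloch n) $ i $ j)
      = integral\<^sup>L \<mu> (\<lambda>n. (1 *\<^sub>R bloch n) $ i $ j) - integral\<^sup>L \<mu> (\<lambda>n. (\<beta> n *\<^sub>R bloch n) $ i $ j)"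
    for i j
  proof -
    have "integrable \<mu> (\<lambda>n. (\<gamma> n *\<^sub>R bloch n) $ i $ j)"
      if "\<gamma> \<in> borel_measurable \<mu>" "\<forall>n\<in>space \<mu>. 0 \<le> \<gamma> n \<and> \<gamma> n \<le> 1" for \<gamma>
      using that by (intro integrable_scaleR_bloch[OF \<mu>]) auto
    from this[of "\<lambda>_. 1"] this[OF \<beta>] show ?thesis
      by (simp add: scaleR_diff_left flip: Bochner_Integration.integral_diff)
  qed
  moreover have "ptrace_A \<rho> = mat_integral \<mu> bloch" using a by (simp add: ansatz_def)
  ultimately have "ptrace_A \<rho> - X = mat_integral \<mu> (\<lambda>n. (1 - \<beta> n) *\<^sub>R bloch n)"
    unfolding X mat_integral_def by (simp add: vec_eq_iff)
  moreover have "\<forall>n\<in>space \<mu>. 0 \<le> 1 - \<beta> n \<and> 1 - \<beta> n \<le> 1" using \<beta>(2) by simp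
  ultimately show ?thesis
    using \<beta>(1) unfolding ansatz_box_def by (intro CollectI exI[of _ "\<lambda>n. 1 - \<beta> n"]) simp
qed

lemma M_A_iff: "M \<in> M_A \<longleftrightarrow> psd M \<and> psd (mat 1 - M)"
  by (auto simp: M_A_def loewner_le_def psd_def)

lemma mat_one_minus_in_M_A: "M \<in> M_A \<Longrightarrow> mat 1 - M \<in> M_A"
  by (simp add: M_A_iff)

lemma psd_mtrace_one_in_S_A: "psd (M :: qop) \<Longrightarrow> mtrace M = 1 \<Longrightarrow> M \<in> S_A"
  using psd_trace_minus[of M] by (simp add: S_A_def M_A_iff)

lemma epr_map_in_ansatz_box_of_mtrace_le_one:
  assumes M: "M \<in> M_A" and "Re (mtrace M) \<le> 1" and S: "epr_map \<rho> ` S_A \<subseteq> ansatz_box \<mu>"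
  shows "epr_map \<rho> M \<in> ansatz_box \<mu>"
proof -
  define t where "t = Re (mtrace M)"
  have psd: "psd M" using M by (simp add: M_A_iff)
  have tr: "mtrace M = of_real t"
    unfolding t_def using psd hermitian_mtrace_real by (auto simp: psd_iff_quad_form)
  consider "t = 0" | "0 < t"
    using psd_mtrace_nonneg[OF psd] unfolding t_def by linarith
  then show ?thesis
  proof cases
    case 1
    then have "M = 0" using psd_mtrace_zero[OF psd] tr by simp
    then show ?thesis using zero_in_ansatz_box epr_map_scaleR[of \<rho> 0 0] by simp
  next
    case 2
    have "mtrace ((1 / t) *\<^sub>R M) = 1"
      using 2 by (simp add: mtrace_scaleR tr of_real_def)
    then have "(1 / t) *\<^sub>R M \<in> S_A"
      using psd 2 by (intro psd_mtrace_one_in_S_A psd_scaleR) auto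
    then have "t *\<^sub>R epr_map \<rho> ((1 / t) *\<^sub>R M) \<in> ansatz_box \<mu>"
      using S 2 assms(2) unfolding t_def by (intro scaleR_in_ansatz_box) auto
    then show ?thesis using 2 by (simp add: epr_map_scaleR)
  qed
qed

lemma epr_map_in_ansatz_box:
  assumes a: "ansatz \<rho> \<mu>" and M: "M \<in> M_A" and S: "epr_map \<rho> ` S_A \<subseteq> ansatz_box \<mu>"
  shows "epr_map \<rho> M \<in> ansatz_box \<mu>"
proof (cases "Re (mtrace M) \<le> 1")
  case True
  then show ?thesis using epr_map_in_ansatz_box_of_mtrace_le_one[OF M _ S] by simp
next
  case False
  have "Re (mtrace (mat 1 - M)) \<le> 1"
    using False by (simp add: mtrace_qop mat_def)
  then have "epr_map \<rho> (mat 1 - M) \<in> ansatz_box \<mu>"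
    using epr_map_in_ansatz_box_of_mtrace_le_one[OF mat_one_minus_in_M_A[OF M] _ S] by simp
  then have "ptrace_A \<rho> - epr_map \<rho> (mat 1 - M) \<in> ansatz_box \<mu>"
    by (rule marginal_minus_in_ansatz_box[OF a])
  then show ?thesis by (simp add: epr_map_diff epr_map_one)
qed

theorem lemma1:
  fixes \<rho> :: qqop and \<mu> :: "(real ^ 3) measure"
  assumes "density_op \<rho>" and "ansatz \<rho> \<mu>"
  shows "epr_map \<rho> ` M_A \<subseteq> ansatz_box \<mu> \<longleftrightarrow> epr_map \<rho> ` S_A \<subseteq> ansatz_box \<mu>"
proof
  assume "epr_map \<rho> ` M_A \<subseteq> ansatz_box \<mu>"
  moreover have "S_A \<subseteq> M_A" by (auto simp: S_A_def)
  ultimately show "epr_map \<rho> ` S_A \<subseteq> ansatz_box \<mu>" by blast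
next
  assume "epr_map \<rho> ` S_A \<subseteq> ansatz_box \<mu>"
  then show "epr_map \<rho> ` M_A \<subseteq> ansatz_box \<mu>"
    using epr_map_in_ansatz_box[OF assms(2)] by blast
qed

end
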